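(* Let $n\ge 1$ and $m\ge 2$ be integers with $m\nmid n$, let $\ell=\lfloor n/m\rfloor$, and let $G_{n,m}=\{\theta_{m,0}+\sum_{k=1}^{\ell}a_k\theta_{m,k}: a_k\in\mathbb{F}_2\}$. If $f,g\in G_{n,m}$, then $f\circ g\in G_{n,m}$. In particular, $(G_{n,m},\circ)$ is a monoid.
   Context: For $x=(x_0,\dots,x_{n-1})\in\mathbb{F}_2^n$, indices of coordinates are taken modulo $n$. For a nonnegative integer $k$, the map $\theta_{m,k}\colon\mathbb{F}_2^n\to\mathbb{F}_2^n$ is defined by $\theta_{m,k}(x)=y$ with $y_i=x_{i+mk}\prod_{1\le j\le mk-1,\ m\nmid j}(x_{i+j}+1)$ for $i\in\{0,\dots,n-1\}$; $\theta_{m,0}$ is the identity map. Sums of maps are pointwise sums over $\mathbb{F}_2^n$, and $\circ$ denotes composition of maps. *)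

theory Defs
  imports Main "HOL-Library.Z2" "HOL-Algebra.Group"
begin

text \<open>Vectors of F_2^n are modelled as functions nat => bit; only the
  coordinates 0..n-1 are meaningful, indices are reduced modulo n.\<close>

definition theta :: "nat \<Rightarrow> nat \<Rightarrow> nat \<Rightarrow> (nat \<Rightarrow> bit) \<Rightarrow> (nat \<Rightarrow> bit)" where
  "theta n m k x =
     (if k = 0 then x
      else (\<lambda>i. if i < n then
                  x ((i + m * k) mod n) *
                  (\<Prod>j\<in>{j. 1 \<le> j \<and> j \<le> m * k - 1 \<and> \<not> m dvd j}. x ((i + j) mod n) + 1)
                else 0))"

definition G_elem :: "nat \<Rightarrow> nat \<Rightarrow> (nat \<Rightarrow> bit) \<Rightarrow> (nat \<Rightarrow> bit) \<Rightarrow> (nat \<Rightarrow> bit)" where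
  "G_elem n m a x = (\<lambda>i. theta n m 0 x i + (\<Sum>k\<in>{1..n div m}. a k * theta n m k x i))"

definition G :: "nat \<Rightarrow> nat \<Rightarrow> ((nat \<Rightarrow> bit) \<Rightarrow> (nat \<Rightarrow> bit)) set" where
  "G n m = {G_elem n m a | a. True}"

end

theory Submission
  imports "HOL-Computational_Algebra.Polynomial" Defs
begin

(*
  Extend theta_{m,k} to operators theta_L on infinite 0/1 sequences, for an arbitrary offset L:
  (theta_L X)_i = 1 iff X_(i+L) = 1 and X vanishes at all positions i + j with 0 < j < L and
  m not dividing j, so that theta_{m,k} is theta_(mk) on the n-periodic extension. For offsets
  K, L divisible by m an inspection of the positions of the ones gives

      theta_K (X + theta_L X) = theta_K X + theta_(K+L) X.

  Hence p |-> f_p = sum_k p_k theta_(mk) turns multiplication by 1 + x^j into composition with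
  id + theta_(mj), and products of such binomials into compositions. Since m does not divide n,
  theta_(mk) vanishes on n-periodic sequences as soon as mk > n, so f_p depends only on p modulo
  x^(e+1), e = n div m; and modulo any power of x each polynomial with constant term 1 is a
  product of binomials 1 + x^j. So f_p o f_q = f_(pq) whenever q has constant term 1, and
  G_{n,m} consists of the f_p with p = 1 + sum_(k <= e) a_k x^k.
*)

(* By default simp rewrites + and * on bit into XOR and AND, which breaks sum manipulations. *)
declare add_bit_eq_xor [simp del] mult_bit_eq_and [simp del]

section \<open>Theta operators with arbitrary offset\<close>

definition theta_seq :: "nat \<Rightarrow> nat \<Rightarrow> (nat \<Rightarrow> bit) \<Rightarrow> nat \<Rightarrow> bit" where
  "theta_seq m L X i =
     of_bool (X (i + L) = 1 \<and> (\<forall>j. 0 < j \<longrightarrow> j < L \<longrightarrow> \<not> m dvd j \<longrightarrow> X (i + j) = 0))"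

lemma of_bool_eq_one_bit [simp]: "of_bool (b = 1) = (b :: bit)"
  by (cases b) simp_all

lemma theta_seq_0 [simp]: "theta_seq m 0 X = X"
  by (rule ext) (simp add: theta_seq_def)

lemma theta_seq_shift: "theta_seq m L X (p + i) = theta_seq m L (\<lambda>r. X (p + r)) i"
  by (simp add: theta_seq_def add.assoc)

lemma not_dvd_diff_nat:
  fixes m a b :: nat
  assumes "m dvd a" "\<not> m dvd b"
  shows "b \<le> a \<Longrightarrow> \<not> m dvd a - b" and "a \<le> b \<Longrightarrow> \<not> m dvd b - a"
  using assms by (metis dvd_diff_nat diff_diff_cancel, metis dvd_add_right_iff le_add_diff_inverse)

lemma theta_seq_at_clear_offset:
  assumes K: "m dvd K" and clear: "\<And>q. 0 < q \<Longrightarrow> q < K \<Longrightarrow> \<not> m dvd q \<Longrightarrow> X q = 0"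
  shows "theta_seq m L X K = theta_seq m (K + L) X 0"
proof -
  have "(\<forall>j. 0 < j \<longrightarrow> j < L \<longrightarrow> \<not> m dvd j \<longrightarrow> X (K + j) = 0) \<longleftrightarrow>
        (\<forall>j. 0 < j \<longrightarrow> j < K + L \<longrightarrow> \<not> m dvd j \<longrightarrow> X j = 0)" (is "?after_K \<longleftrightarrow> ?below_KL")
  proof
    assume ?after_K
    show ?below_KL
    proof (intro allI impI)
      fix j assume j: "0 < j" "j < K + L" "\<not> m dvd j"
      with K consider "j < K" | "K < j" by (metis linorder_neqE_nat)
      then show "X j = 0"
      proof cases
        case 1
        then show ?thesis using clear j by blast
      next
        case 2
        then show ?thesis
          using \<open>?after_K\<close>[rule_format, of "j - K"] j not_dvd_diff_nat(2)[OF K j(3)] by simp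
      qed
    qed
  next
    assume ?below_KL
    then show ?after_K using K by (auto simp: dvd_add_right_iff dest: spec[of _ "K + _"])
  qed
  then show ?thesis by (simp add: theta_seq_def add.commute)
qed

lemma theta_seq_add_theta_seq_clear:
  assumes K: "m dvd K" and L: "m dvd L"
    and clear: "\<And>q. 0 < q \<Longrightarrow> q < K \<Longrightarrow> \<not> m dvd q \<Longrightarrow> X q = 0"
  shows "theta_seq m K (\<lambda>q. X q + theta_seq m L X q) 0 = theta_seq m K X 0 + theta_seq m (K + L) X 0"
proof -
  define Z where "Z q = X q + theta_seq m L X q" for q
  have shift: "theta_seq m L X K = theta_seq m (K + L) X 0"
    using K clear by (rule theta_seq_at_clear_offset)
  have "theta_seq m K X 0 = X K"
    using clear by (simp add: theta_seq_def)
  moreover have "theta_seq m K Z 0 = Z K"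
  proof (cases "Z K = 1")
    case ZK: True
    have "Z q = 0" if q: "0 < q" "q < K" "\<not> m dvd q" for q
    proof (rule ccontr)
      assume "Z q \<noteq> 0"
      then have hit: "X (q + L) = 1" "\<And>j. 0 < j \<Longrightarrow> j < L \<Longrightarrow> \<not> m dvd j \<Longrightarrow> X (q + j) = 0"
        using clear[OF q] by (auto simp: Z_def theta_seq_def)
      have bad: "\<not> m dvd q + L" using q(3) L by (simp add: dvd_add_left_iff)
      have "q + L \<noteq> K" using K bad by auto
      moreover have "\<not> q + L < K" using clear[of "q + L"] hit(1) bad q(1) by auto
      ultimately have "K < q + L" by linarith
      then have "X K = 0"
        using hit(2)[of "K - q"] q not_dvd_diff_nat(1)[OF K q(3)] by auto
      moreover have "theta_seq m (K + L) X 0 = 0"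
        unfolding theta_seq_def using hit(1) bad q(1,2) by (auto intro!: exI[of _ "q + L"])
      ultimately show False using ZK shift by (simp add: Z_def)
    qed
    then show ?thesis using ZK by (simp add: theta_seq_def)
  qed (simp add: theta_seq_def)
  ultimately show ?thesis using shift by (simp add: Z_def[abs_def])
qed

lemma theta_seq_add_theta_seq_blocked:
  assumes K: "m dvd K" and L: "m dvd L" "0 < L"
    and blocked: "0 < N" "N < K" "\<not> m dvd N" "X N = 1"
  shows "theta_seq m K (\<lambda>q. X q + theta_seq m L X q) 0 = theta_seq m K X 0 + theta_seq m (K + L) X 0"
proof -
  define Z where "Z q = X q + theta_seq m L X q" for q
  have "theta_seq m K X 0 = 0" "theta_seq m (K + L) X 0 = 0"
    using blocked by (auto simp: theta_seq_def intro!: exI[of _ N])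
  moreover have "theta_seq m K Z 0 = 0"
  proof (rule ccontr)
    assume "theta_seq m K Z 0 \<noteq> 0"
    then have ZK: "Z K = 1" and Z_clear: "\<And>j. 0 < j \<Longrightarrow> j < K \<Longrightarrow> \<not> m dvd j \<Longrightarrow> Z j = 0"
      by (auto simp: theta_seq_def)
    obtain b where b: "0 < b" "b < K" "\<not> m dvd b" "X b = 1"
      and last: "\<And>q. 0 < q \<Longrightarrow> q < K \<Longrightarrow> \<not> m dvd q \<Longrightarrow> X q = 1 \<Longrightarrow> q \<le> b"
      using Nat.ex_has_greatest_nat[of "\<lambda>q. 0 < q \<and> q < K \<and> \<not> m dvd q \<and> X q = 1" N K] blocked
      by auto
    have "theta_seq m L X b = 1"
      using Z_clear[OF b(1-3)] b(4) by (simp add: Z_def add_bit_eq_xor)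
    then have hit: "X (b + L) = 1" "\<And>j. 0 < j \<Longrightarrow> j < L \<Longrightarrow> \<not> m dvd j \<Longrightarrow> X (b + j) = 0"
      by (auto simp: theta_seq_def)
    have bad: "\<not> m dvd b + L" using b(3) L(1) by (simp add: dvd_add_left_iff)
    have "b + L \<noteq> K" using K bad by auto
    moreover have "\<not> b + L < K" using last[of "b + L"] hit(1) bad b(1) L(2) by auto
    ultimately have "K < b + L" by linarith
    then have "X K = 0"
      using hit(2)[of "K - b"] b not_dvd_diff_nat(1)[OF K b(3)] by auto
    moreover have "theta_seq m L X K = 0"
      unfolding theta_seq_def using hit(1) \<open>K < b + L\<close> b(2) not_dvd_diff_nat(2)[OF K bad]
      by (auto intro!: exI[of _ "b + L - K"])
    ultimately show False using ZK by (simp add: Z_def)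
  qed
  ultimately show ?thesis by (simp add: Z_def[abs_def])
qed

lemma theta_seq_add_theta_seq:
  assumes "m dvd K" "m dvd L"
  shows "theta_seq m K (\<lambda>q. X q + theta_seq m L X q) p = theta_seq m K X p + theta_seq m (K + L) X p"
proof -
  define Y where "Y = (\<lambda>r. X (p + r))"
  have "theta_seq m K (\<lambda>r. Y r + theta_seq m L Y r) 0 = theta_seq m K Y 0 + theta_seq m (K + L) Y 0"
  proof (cases "L = 0")
    case True
    then show ?thesis by (simp add: theta_seq_def)
  next
    case False
    show ?thesis
    proof (cases "\<exists>N. 0 < N \<and> N < K \<and> \<not> m dvd N \<and> Y N = 1")
      case True
      then obtain N where "0 < N" "N < K" "\<not> m dvd N" "Y N = 1" by blast
      with False show ?thesis by (intro theta_seq_add_theta_seq_blocked[OF assms]) simp_all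
    next
      case False
      then show ?thesis by (intro theta_seq_add_theta_seq_clear[OF assms]) auto
    qed
  qed
  moreover have "theta_seq m K (\<lambda>q. X q + theta_seq m L X q) p
      = theta_seq m K (\<lambda>r. Y r + theta_seq m L Y r) 0"
    using theta_seq_shift[of m K "\<lambda>q. X q + theta_seq m L X q" p 0]
    by (simp add: Y_def theta_seq_shift)
  ultimately show ?thesis
    using theta_seq_shift[of m K X p 0] theta_seq_shift[of m "K + L" X p 0] by (simp add: Y_def)
qed

section \<open>Polynomial combinations of theta operators\<close>

definition theta_sum :: "nat \<Rightarrow> bit poly \<Rightarrow> (nat \<Rightarrow> bit) \<Rightarrow> nat \<Rightarrow> bit" where
  "theta_sum m p X i = (\<Sum>k\<le>degree p. coeff p k * theta_seq m (m * k) X i)"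

lemma theta_sum_atMost:
  "degree p \<le> N \<Longrightarrow> theta_sum m p X i = (\<Sum>k\<le>N. coeff p k * theta_seq m (m * k) X i)"
  unfolding theta_sum_def by (intro sum.mono_neutral_left) (auto simp: coeff_eq_0)

lemma theta_sum_add: "theta_sum m (p + q) X i = theta_sum m p X i + theta_sum m q X i"
proof -
  define N where "N = max (degree p) (degree q)"
  have "degree (p + q) \<le> N" by (simp add: N_def degree_add_le)
  then show ?thesis
    by (simp add: theta_sum_atMost[of _ N] N_def sum.distrib distrib_right)
qed

lemma theta_sum_monom_mult:
  "theta_sum m (monom 1 l * p) X i = (\<Sum>k\<le>degree p. coeff p k * theta_seq m (m * (k + l)) X i)"
proof -
  have "degree (monom 1 l * p) \<le> degree p + l"
    using degree_mult_le[of "monom 1 l" p] degree_monom_le[of "1 :: bit" l] by linarith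
  then have "theta_sum m (monom 1 l * p) X i
      = (\<Sum>k\<le>degree p + l. coeff (monom 1 l * p) k * theta_seq m (m * k) X i)"
    by (rule theta_sum_atMost)
  also have "\<dots> = (\<Sum>k\<in>{l..degree p + l}. coeff p (k - l) * theta_seq m (m * k) X i)"
    by (rule sum.mono_neutral_cong_right) (auto simp: coeff_monom_mult)
  also have "\<dots> = (\<Sum>k\<le>degree p. coeff p k * theta_seq m (m * (k + l)) X i)"
    unfolding atMost_atLeast0
    using sum.shift_bounds_cl_nat_ivl[of "\<lambda>k. coeff p (k - l) * theta_seq m (m * k) X i" 0 l]
    by simp
  finally show ?thesis .
qed

lemma theta_sum_one [simp]: "theta_sum m 1 X = X"
  by (rule ext) (simp add: theta_sum_def)

lemma theta_sum_monom: "theta_sum m (monom 1 l) X i = theta_seq m (m * l) X i"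
  using theta_sum_monom_mult[of m l 1] by simp

lemma theta_sum_add_theta_seq:
  "theta_sum m p (\<lambda>q. X q + theta_seq m (m * l) X q) i
     = theta_sum m p X i + theta_sum m (monom 1 l * p) X i"
  unfolding theta_sum_monom_mult
  by (simp add: theta_sum_def theta_seq_add_theta_seq distrib_left sum.distrib)

lemma theta_sum_binomial: "theta_sum m (1 + monom 1 l) X = (\<lambda>q. X q + theta_seq m (m * l) X q)"
  by (rule ext) (simp add: theta_sum_add theta_sum_monom)

lemma theta_sum_mult_binomial:
  "theta_sum m p (theta_sum m (1 + monom 1 l) X) = theta_sum m (p * (1 + monom 1 l)) X"
proof -
  have "p * (1 + monom 1 l) = p + monom 1 l * p" by (simp add: algebra_simps)
  then show ?thesis
    by (intro ext) (simp only: theta_sum_binomial theta_sum_add_theta_seq theta_sum_add)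
qed

definition binomial_prod :: "nat list \<Rightarrow> bit poly" where
  "binomial_prod ls = (\<Prod>l\<leftarrow>ls. 1 + monom 1 l)"

lemma theta_sum_mult_binomial_prod:
  "theta_sum m p (theta_sum m (binomial_prod ls) X) = theta_sum m (p * binomial_prod ls) X"
proof (induction ls arbitrary: p X)
  case Nil
  then show ?case by (simp add: binomial_prod_def)
next
  case (Cons l ls)
  have "theta_sum m p (theta_sum m (binomial_prod (l # ls)) X)
      = theta_sum m p (theta_sum m (binomial_prod ls) (theta_sum m (1 + monom 1 l) X))"
    by (simp add: binomial_prod_def theta_sum_mult_binomial mult.commute)
  also have "\<dots> = theta_sum m (p * binomial_prod ls) (theta_sum m (1 + monom 1 l) X)"
    by (rule Cons.IH)
  also have "\<dots> = theta_sum m (p * binomial_prod ls * (1 + monom 1 l)) X"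
    by (rule theta_sum_mult_binomial)
  finally show ?case by (simp add: binomial_prod_def ac_simps)
qed

lemma coeff_binomial_prod_0: "(\<And>l. l \<in> set ls \<Longrightarrow> 0 < l) \<Longrightarrow> coeff (binomial_prod ls) 0 = 1"
  by (induction ls) (auto simp: binomial_prod_def coeff_mult_0)

(* If q - B = x^N c with c_0 = 1, then q = B (1 + x^N) modulo x^(N+1), as B_0 = 1. *)
lemma binomial_prod_approx:
  fixes q :: "bit poly"
  assumes "coeff q 0 = 1"
  shows "\<exists>ls. (\<forall>l\<in>set ls. 0 < l) \<and> monom 1 N dvd q - binomial_prod ls"
proof (induction N)
  case 0
  show ?case by (intro exI[of _ "[]"]) simp
next
  case (Suc N)
  then obtain ls c where ls: "\<forall>l\<in>set ls. 0 < l" and c: "q - binomial_prod ls = monom 1 N * c"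
    by (auto elim: dvdE)
  have B0: "coeff (binomial_prod ls) 0 = 1" using ls by (simp add: coeff_binomial_prod_0)
  have dvd_Suc: "monom 1 (Suc N) dvd monom 1 N * r" if "coeff r 0 = 0" for r :: "bit poly"
  proof -
    have "monom 1 1 dvd r" using that by (simp add: monom_1_dvd_iff')
    moreover have "monom 1 (Suc N) = monom 1 N * monom (1 :: bit) 1" by (simp add: mult_monom)
    ultimately show ?thesis by simp
  qed
  show ?case
  proof (cases "coeff c 0 = 0")
    case True
    then show ?thesis using ls c dvd_Suc by metis
  next
    case False
    have q: "q = monom 1 N * c + binomial_prod ls" using c by (simp add: diff_eq_eq)
    have "0 < N"
    proof (rule ccontr)
      assume "\<not> 0 < N"
      then have "coeff c 0 = coeff q 0 - coeff (binomial_prod ls) 0" by (simp add: q)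
      then show False using False assms B0 by simp
    qed
    have "q - binomial_prod (N # ls) = monom 1 N * (c - binomial_prod ls)"
      by (simp add: q binomial_prod_def algebra_simps)
    moreover have "coeff (c - binomial_prod ls) 0 = 0" using False B0 by simp
    ultimately show ?thesis
      using ls \<open>0 < N\<close> dvd_Suc by (intro exI[of _ "N # ls"]) auto
  qed
qed

section \<open>Periodic sequences\<close>

definition periodic :: "nat \<Rightarrow> (nat \<Rightarrow> 'a) \<Rightarrow> bool" where
  "periodic n X \<longleftrightarrow> (\<forall>q. X (q + n) = X q)"

lemma periodicD: "periodic n X \<Longrightarrow> X (q + n) = X q"
  by (simp add: periodic_def)

lemma periodic_mod:
  assumes "periodic n X"
  shows "X (q mod n) = X q"
proof -
  have "X (r + k * n) = X r" for r k
  proof (induction k)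
    case (Suc k)
    have "r + Suc k * n = r + k * n + n" by simp
    then show ?case using periodicD[OF assms, of "r + k * n"] Suc.IH by (simp only:)
  qed simp
  then show ?thesis by (metis mod_div_mult_eq)
qed

lemma theta_seq_periodic:
  assumes "periodic n X"
  shows "periodic n (theta_seq m L X)"
proof -
  have "X (q + n + j) = X (q + j)" for q j
    using periodicD[OF assms, of "q + j"] by (simp add: ac_simps)
  then show ?thesis by (simp add: periodic_def theta_seq_def)
qed

lemma theta_sum_periodic: "periodic n X \<Longrightarrow> periodic n (theta_sum m p X)"
  using theta_seq_periodic unfolding periodic_def by (simp add: theta_sum_def[abs_def])

lemma theta_seq_vanish:
  assumes periodic: "periodic n X"
    and "\<not> m dvd n" "m dvd M" "n < M"
  shows "theta_seq m M X i = 0"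
proof -
  have "0 < n" using \<open>\<not> m dvd n\<close> by (rule contrapos_np) simp
  have "X (i + M) = X (i + (M - n))"
    using periodicD[OF periodic, of "i + (M - n)"] \<open>n < M\<close> by simp
  moreover have "\<not> m dvd M - n"
    using not_dvd_diff_nat(1)[OF assms(3,2)] \<open>n < M\<close> by simp
  ultimately show ?thesis
    using \<open>0 < n\<close> \<open>n < M\<close> by (auto simp: theta_seq_def intro!: exI[of _ "M - n"])
qed

lemma theta_sum_vanish:
  assumes periodic: "periodic n X"
    and "0 < m" "\<not> m dvd n"
  shows "theta_sum m (monom 1 (n div m + 1) * r) X i = 0"
  unfolding theta_sum_monom_mult
proof (intro sum.neutral ballI)
  fix k
  have "n < m * (n div m + 1)"
    using \<open>0 < m\<close> by (simp add: dividend_less_times_div)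
  also have "\<dots> \<le> m * (k + (n div m + 1))" by simp
  finally show "coeff r k * theta_seq m (m * (k + (n div m + 1))) X i = 0"
    using theta_seq_vanish[OF periodic \<open>\<not> m dvd n\<close>] by simp
qed

lemma theta_sum_cong:
  assumes periodic: "periodic n X"
    and "0 < m" "\<not> m dvd n" and "monom 1 (n div m + 1) dvd p - q"
  shows "theta_sum m p X = theta_sum m q X"
proof
  fix i
  obtain r where "p - q = monom 1 (n div m + 1) * r" using assms(4) by (elim dvdE)
  then have "p = q + monom 1 (n div m + 1) * r" by (simp add: diff_eq_eq)
  then show "theta_sum m p X i = theta_sum m q X i"
    using theta_sum_vanish[OF periodic assms(2,3)] by (simp add: theta_sum_add)
qed

lemma theta_sum_mult:
  assumes periodic: "periodic n X"
    and "0 < m" "\<not> m dvd n" and "coeff q 0 = 1"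
  shows "theta_sum m p (theta_sum m q X) = theta_sum m (p * q) X"
proof -
  obtain ls where ls: "monom 1 (n div m + 1) dvd q - binomial_prod ls"
    using binomial_prod_approx[OF assms(4)] by blast
  then have "monom 1 (n div m + 1) dvd p * q - p * binomial_prod ls"
    by (metis dvd_mult right_diff_distrib)
  with ls show ?thesis
    using theta_sum_cong[OF periodic assms(2,3)] theta_sum_mult_binomial_prod by metis
qed

section \<open>The maps of G n m\<close>

definition periodic_ext :: "nat \<Rightarrow> (nat \<Rightarrow> bit) \<Rightarrow> nat \<Rightarrow> bit" where
  "periodic_ext n x q = x (q mod n)"

lemma periodic_ext_periodic: "periodic n (periodic_ext n x)"
  by (simp add: periodic_def periodic_ext_def)

lemma prod_plus_one_bit:
  "finite A \<Longrightarrow> (\<Prod>j\<in>A. f j + 1) = of_bool (\<forall>j\<in>A. f j = (0 :: bit))"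
proof (induction A rule: finite_induct)
  case (insert a A)
  then show ?case by (cases "f a") simp_all
qed simp

lemma theta_eq_theta_seq:
  assumes "0 < k" "i < n"
  shows "theta n m k x i = theta_seq m (m * k) (periodic_ext n x) i"
proof -
  have A: "{j. 1 \<le> j \<and> j \<le> m * k - 1 \<and> \<not> m dvd j} = {j. 0 < j \<and> j < m * k \<and> \<not> m dvd j}"
    by auto
  have "theta n m k x i
      = x ((i + m * k) mod n) * (\<Prod>j\<in>{j. 0 < j \<and> j < m * k \<and> \<not> m dvd j}. x ((i + j) mod n) + 1)"
    using assms unfolding theta_def A by simp
  then show ?thesis
    by (cases "x ((i + m * k) mod n)") (simp_all add: prod_plus_one_bit theta_seq_def periodic_ext_def)
qed

definition G_poly :: "nat \<Rightarrow> nat \<Rightarrow> (nat \<Rightarrow> bit) \<Rightarrow> bit poly" where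
  "G_poly n m a = 1 + (\<Sum>k\<in>{1..n div m}. monom (a k) k)"

lemma coeff_G_poly:
  "coeff (G_poly n m a) k = (if k = 0 then 1 else if k \<le> n div m then a k else 0)"
  by (simp add: G_poly_def coeff_sum)

lemma G_elem_eq_theta_sum:
  "G_elem n m a x i = (if i < n then theta_sum m (G_poly n m a) (periodic_ext n x) i else x i)"
proof (cases "i < n")
  case True
  have "degree (G_poly n m a) \<le> n div m"
    by (rule degree_le) (simp add: coeff_G_poly)
  then have "theta_sum m (G_poly n m a) (periodic_ext n x) i
      = (\<Sum>k\<in>{0..n div m}. coeff (G_poly n m a) k * theta_seq m (m * k) (periodic_ext n x) i)"
    by (simp add: theta_sum_atMost atMost_atLeast0)
  also have "\<dots> = x i + (\<Sum>k\<in>{1..n div m}. a k * theta n m k x i)"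
    using True by (simp add: sum.atLeast_Suc_atMost coeff_G_poly theta_eq_theta_seq periodic_ext_def)
  finally show ?thesis using True by (simp add: G_elem_def theta_def)
next
  case False
  then show ?thesis by (simp add: G_elem_def theta_def)
qed

lemma periodic_ext_G_elem:
  "periodic_ext n (G_elem n m a x) = theta_sum m (G_poly n m a) (periodic_ext n x)"
proof
  fix q
  show "periodic_ext n (G_elem n m a x) q = theta_sum m (G_poly n m a) (periodic_ext n x) q"
  proof (cases "n = 0")
    case False
    then have "periodic_ext n (G_elem n m a x) q = theta_sum m (G_poly n m a) (periodic_ext n x) (q mod n)"
      by (simp add: periodic_ext_def G_elem_eq_theta_sum)
    then show ?thesis
      using periodic_mod[OF theta_sum_periodic[OF periodic_ext_periodic]] by metis
  qed (simp add: periodic_ext_def G_elem_eq_theta_sum G_poly_def)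
qed

lemma G_elem_comp:
  assumes "0 < m" "\<not> m dvd n"
  shows "G_elem n m a \<circ> G_elem n m b = G_elem n m (coeff (G_poly n m a * G_poly n m b))"
proof (intro ext)
  fix x i
  let ?c = "coeff (G_poly n m a * G_poly n m b)"
  have "monom 1 (n div m + 1) dvd G_poly n m ?c - G_poly n m a * G_poly n m b"
    by (simp add: monom_1_dvd_iff' coeff_G_poly coeff_mult_0)
  then have "theta_sum m (G_poly n m a * G_poly n m b) (periodic_ext n x)
      = theta_sum m (G_poly n m ?c) (periodic_ext n x)"
    using theta_sum_cong[OF periodic_ext_periodic assms] by metis
  then show "(G_elem n m a \<circ> G_elem n m b) x i = G_elem n m ?c x i"
    by (simp add: G_elem_eq_theta_sum periodic_ext_G_elem
        theta_sum_mult[OF periodic_ext_periodic assms] coeff_G_poly)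
qed

lemma G_elem_zero: "G_elem n m (\<lambda>_. 0) = id"
  by (intro ext) (simp add: G_elem_def theta_def)

theorem theorem1:
  fixes n m :: nat
  assumes "n \<ge> 1" and "m \<ge> 2" and "\<not> m dvd n"
  shows "(\<forall>f\<in>G n m. \<forall>g\<in>G n m. f \<circ> g \<in> G n m)
         \<and> monoid \<lparr>carrier = G n m, mult = (\<circ>), one = id\<rparr>"
proof -
  have closed: "\<forall>f\<in>G n m. \<forall>g\<in>G n m. f \<circ> g \<in> G n m"
    using G_elem_comp[of m n] assms(2,3) by (auto simp: G_def)
  have "id \<in> G n m"
    unfolding G_def G_elem_zero[of n m, symmetric] by blast
  with closed have "monoid \<lparr>carrier = G n m, mult = (\<circ>), one = id\<rparr>"
    by unfold_locales (auto simp: comp_assoc)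
  with closed show ?thesis by blast
qed

end
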